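(* Fix integers $k_1,k_2$ with $-1\le k_1\le k_2$ and $g\ge 4k_1+3$. Suppose $\overline{x}=(x_1,\ldots,x_{2k_1+1})\in\{1,2,3\}^{2k_1+1}$ satisfies: (1) whenever $i_1,i_2,i_3\in[1,2k_1+1]$ satisfy $i_1+i_2=i_3$, we have $(x_{i_1},x_{i_2},x_{i_3})\ne(1,1,3)$; (2) $a(\overline{x})+b(\overline{x})-c(\overline{x})=2k_1+1-k_2$; (3) $a(\overline{x})+2b(\overline{x})\le k_1+1$. Then the number of numerical semigroups $S$ with $g(S)=g$, $m(S)=g-k_1$, $e(S)=g-k_2$, and whose Kunz coordinate vector with respect to $m=m(S)$ has first $2k_1+1$ coordinates equal to $\overline{x}$, is \[\binom{g-3k_1-2}{k_1+1-a(\overline{x})-2b(\overline{x})}.\]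
   Context: A numerical semigroup $S$ is a submonoid of $\mathbb{N}_0$ with finite complement; $g(S)$ is the size of the complement, $m(S)$ the smallest nonzero element, $e(S)$ the size of the minimal generating set $(S\setminus\{0\})\setminus((S\setminus\{0\})+(S\setminus\{0\}))$. For $m=m(S)$, the Apéry set $\{s\in S: s-m\notin S\}$ contains exactly one element $a_i$ in each residue class $i$ mod $m$; writing $a_i=k_im+i$ for $1\le i\le m-1$, the Kunz coordinate vector of $S$ with respect to $m$ is $(k_1,\ldots,k_{m-1})$. For $\overline{x}=(x_1,\ldots,x_t)\in\{1,2,3\}^t$: $a(\overline{x})=\#\{i: x_i=2\}$, $b(\overline{x})=\#\{i: x_i=3\}$, $c(\overline{x})=\#\{i\in[1,t]: \exists j_1,j_2\in[1,t],\ j_1+j_2=i,\ (x_{j_1},x_{j_2},x_i)=(1,1,2)\}$. *)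

theory Defs
  imports Main
begin

definition numerical_semigroup :: "nat set \<Rightarrow> bool" where
  "numerical_semigroup S \<longleftrightarrow> 0 \<in> S \<and> (\<forall>x\<in>S. \<forall>y\<in>S. x + y \<in> S) \<and> finite (UNIV - S)"

definition genus :: "nat set \<Rightarrow> nat" where
  "genus S = card (UNIV - S)"

definition multiplicity :: "nat set \<Rightarrow> nat" where
  "multiplicity S = (LEAST s. s \<in> S \<and> s \<noteq> 0)"

definition embedding_dimension :: "nat set \<Rightarrow> nat" where
  "embedding_dimension S =
     card ((S - {0}) - {u + v | u v. u \<in> S - {0} \<and> v \<in> S - {0}})"

(* Apery set {s in S. s - m not in S} (s - m taken in the integers). *)
definition apery :: "nat set \<Rightarrow> nat \<Rightarrow> nat set" where
  "apery S m = {s \<in> S. \<not> (m \<le> s \<and> s - m \<in> S)}"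

(* i-th Kunz coordinate w.r.t. m = m(S): a_i = k_i m + i, a_i the Apery element
   in residue class i. *)
definition kunz :: "nat set \<Rightarrow> nat \<Rightarrow> nat" where
  "kunz S i = (let m = multiplicity S;
                   a = (THE a. a \<in> apery S m \<and> a mod m = i)
               in (a - i) div m)"

(* statistics of a vector x_1..x_t, represented by a function on {1..t} *)
definition cnt_a :: "nat \<Rightarrow> (nat \<Rightarrow> nat) \<Rightarrow> nat" where
  "cnt_a t x = card {i \<in> {1..t}. x i = 2}"

definition cnt_b :: "nat \<Rightarrow> (nat \<Rightarrow> nat) \<Rightarrow> nat" where
  "cnt_b t x = card {i \<in> {1..t}. x i = 3}"

definition cnt_c :: "nat \<Rightarrow> (nat \<Rightarrow> nat) \<Rightarrow> nat" where
  "cnt_c t x = card {i \<in> {1..t}. \<exists>j1\<in>{1..t}. \<exists>j2\<in>{1..t}.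
                       j1 + j2 = i \<and> x j1 = 1 \<and> x j2 = 1 \<and> x i = 2}"

end

(*
  A numerical semigroup of multiplicity m is determined by its Kunz coordinates K 1, ..., K (m - 1),
  the Apery element of class i being K i * m + i. The admissible vectors are the positive solutions
  of the Kunz inequalities, the genus is m - 1 plus the excess, the sum of the K i - 1, and the
  minimal generators are m together with the Apery elements that are not the sum of two nonzero
  Apery elements.

  For m = g - k1 the excess is k1 + 1. Pairing j with p - j (and with m + p - j) shows that a
  coordinate K p \<ge> 2 at a position p > 2 k1 + 1 without two coordinates 1 summing to it, or an
  indecomposable 3 in the prefix, would need a larger excess. Hence beyond the prefix all
  coordinates are 1 or 2, and the classes carrying a 2 there, as well as the 3s of the prefix, are
  decomposable; condition (1) makes each such vector admissible. The semigroups are therefore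
  parametrised by the set of positions in ]2 k1 + 1, m[ carrying a 2, a subset of size
  k1 + 1 - a - 2 b of a set of g - 3 k1 - 2 positions, and their decomposable classes are these
  positions, the b threes and the c positions counted by c(x), which yields e(S) = g - k2.
*)

theory Submission
  imports Defs
begin

section \<open>Kunz coordinates\<close>

definition kunz_semigroup :: "nat \<Rightarrow> (nat \<Rightarrow> nat) \<Rightarrow> nat set" where
  "kunz_semigroup m K = {n. K (n mod m) \<le> n div m}"

definition kunz_admissible :: "nat \<Rightarrow> (nat \<Rightarrow> nat) \<Rightarrow> bool" where
  "kunz_admissible m K \<longleftrightarrow> 0 < m \<and> K 0 = 0 \<and> (\<forall>i\<in>{1..<m}. 1 \<le> K i) \<and>
     (\<forall>i<m. \<forall>j<m. K ((i + j) mod m) \<le> K i + K j + (i + j) div m)"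

lemma mem_kunz_semigroup: "n \<in> kunz_semigroup m K \<longleftrightarrow> K (n mod m) \<le> n div m"
  by (simp add: kunz_semigroup_def)

lemma kunz_apery_mem_kunz_semigroup: "i < m \<Longrightarrow> K i * m + i \<in> kunz_semigroup m K"
  by (simp add: kunz_semigroup_def)

lemma kunz_semigroup_cong:
  "0 < m \<Longrightarrow> (\<And>i. i < m \<Longrightarrow> K i = K' i) \<Longrightarrow> kunz_semigroup m K = kunz_semigroup m K'"
  by (simp add: kunz_semigroup_def)

lemma kunz_admissibleD:
  assumes "kunz_admissible m K"
  shows "0 < m" "K 0 = 0" "\<And>i. 0 < i \<Longrightarrow> i < m \<Longrightarrow> 1 \<le> K i"
    "\<And>i j. i < m \<Longrightarrow> j < m \<Longrightarrow> K ((i + j) mod m) \<le> K i + K j + (i + j) div m"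
  using assms unfolding kunz_admissible_def by auto

lemma mult_add_mod_eq_iff:
  fixes m :: nat
  assumes "r < m" "r' < m"
  shows "q * m + r = q' * m + r' \<longleftrightarrow> q = q' \<and> r = r'"
proof
  assume "q * m + r = q' * m + r'"
  then have "(q * m + r) div m = (q' * m + r') div m" "(q * m + r) mod m = (q' * m + r') mod m"
    by simp_all
  then show "q = q' \<and> r = r'" using assms by simp
qed simp

lemma kunz_semigroup_add:
  assumes K: "kunz_admissible m K"
    and u: "u \<in> kunz_semigroup m K" and v: "v \<in> kunz_semigroup m K"
  shows "u + v \<in> kunz_semigroup m K"
proof -
  have m: "0 < m" using kunz_admissibleD(1)[OF K] .
  have "u + v = (u div m + v div m) * m + (u mod m + v mod m)"
    by (simp add: algebra_simps)
  then have "(u + v) div m = u div m + v div m + (u mod m + v mod m) div m"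
    and "(u + v) mod m = (u mod m + v mod m) mod m"
    using m by simp_all
  moreover have "K ((u mod m + v mod m) mod m) \<le> K (u mod m) + K (v mod m) + (u mod m + v mod m) div m"
    using kunz_admissibleD(4)[OF K] m by simp
  ultimately show ?thesis using u v by (simp add: mem_kunz_semigroup)
qed

lemma kunz_inequality_of_add_closed:
  assumes closed: "\<And>u v. u \<in> kunz_semigroup m K \<Longrightarrow> v \<in> kunz_semigroup m K \<Longrightarrow> u + v \<in> kunz_semigroup m K"
    and "0 < m" "i < m" "j < m"
  shows "K ((i + j) mod m) \<le> K i + K j + (i + j) div m"
proof -
  have "(K i + K j) * m + (i + j) \<in> kunz_semigroup m K"
    using closed[OF kunz_apery_mem_kunz_semigroup kunz_apery_mem_kunz_semigroup] assms(3,4)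
    by (simp add: algebra_simps)
  then show ?thesis using \<open>0 < m\<close> by (simp add: mem_kunz_semigroup)
qed

lemma kunz_semigroup_gaps:
  assumes "0 < m"
  shows "UNIV - kunz_semigroup m K = (\<lambda>(i, q). q * m + i) ` (SIGMA i:{..<m}. {..<K i})"
proof (rule set_eqI, rule iffI)
  fix n assume "n \<in> UNIV - kunz_semigroup m K"
  then have "n div m < K (n mod m)" by (simp add: mem_kunz_semigroup)
  then show "n \<in> (\<lambda>(i, q). q * m + i) ` (SIGMA i:{..<m}. {..<K i})"
    using assms by (intro image_eqI[of _ _ "(n mod m, n div m)"]) auto
qed (auto simp: mem_kunz_semigroup)

lemma genus_kunz_semigroup:
  assumes "0 < m"
  shows "finite (UNIV - kunz_semigroup m K)" "genus (kunz_semigroup m K) = (\<Sum>i<m. K i)"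
proof -
  have "inj_on (\<lambda>(i, q). q * m + i) (SIGMA i:{..<m}. {..<K i})"
    by (auto intro!: inj_onI simp: mult_add_mod_eq_iff)
  then have "card (UNIV - kunz_semigroup m K) = card (SIGMA i:{..<m}. {..<K i})"
    unfolding kunz_semigroup_gaps[OF assms] by (rule card_image)
  then show "genus (kunz_semigroup m K) = (\<Sum>i<m. K i)" by (simp add: genus_def)
  show "finite (UNIV - kunz_semigroup m K)" unfolding kunz_semigroup_gaps[OF assms] by auto
qed

lemma numerical_semigroup_kunz_semigroup:
  "kunz_admissible m K \<Longrightarrow> numerical_semigroup (kunz_semigroup m K)"
  unfolding numerical_semigroup_def
  using genus_kunz_semigroup(1) kunz_semigroup_add kunz_admissibleD(1,2)
  by (auto simp: mem_kunz_semigroup)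

lemma kunz_semigroup_nonzero_ge:
  assumes K: "kunz_admissible m K" and "u \<in> kunz_semigroup m K" "u \<noteq> 0"
  shows "m \<le> u"
proof (rule ccontr)
  assume "\<not> m \<le> u"
  then show False using assms kunz_admissibleD(3)[OF K, of u] by (simp add: mem_kunz_semigroup)
qed

lemma multiplicity_kunz_semigroup:
  assumes K: "kunz_admissible m K"
  shows "multiplicity (kunz_semigroup m K) = m"
  unfolding multiplicity_def
proof (rule Least_equality)
  show "m \<in> kunz_semigroup m K \<and> m \<noteq> 0"
    using kunz_admissibleD(1,2)[OF K] by (simp add: mem_kunz_semigroup)
qed (use kunz_semigroup_nonzero_ge[OF K] in blast)

lemma numerical_semigroup_eventually_mem:
  assumes "numerical_semigroup S"
  shows "\<exists>B. \<forall>n\<ge>B. n \<in> S"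
proof -
  have "finite (UNIV - S)" using assms by (simp add: numerical_semigroup_def)
  then obtain B where "\<forall>n\<in>UNIV - S. n < B" by (auto simp: finite_nat_set_iff_bounded)
  then have "\<forall>n\<ge>B. n \<in> S" using not_le by blast
  then show ?thesis ..
qed

lemma multiplicity_le: "s \<in> S \<Longrightarrow> s \<noteq> 0 \<Longrightarrow> multiplicity S \<le> s"
  unfolding multiplicity_def by (simp add: Least_le)

lemma numerical_semigroup_multiplicity:
  assumes "numerical_semigroup S"
  shows "multiplicity S \<in> S" "0 < multiplicity S"
proof -
  obtain B where "\<forall>n\<ge>B. n \<in> S" using numerical_semigroup_eventually_mem[OF assms] ..
  then have "B + 1 \<in> S \<and> B + 1 \<noteq> 0" by simp
  then have "multiplicity S \<in> S \<and> multiplicity S \<noteq> 0"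
    unfolding multiplicity_def by (rule LeastI)
  then show "multiplicity S \<in> S" "0 < multiplicity S" by simp_all
qed

lemma numerical_semigroup_add_mult:
  assumes "numerical_semigroup S" "s \<in> S" "a \<in> S"
  shows "s + q * a \<in> S"
proof (induction q)
  case (Suc q)
  then have "(s + q * a) + a \<in> S" using assms unfolding numerical_semigroup_def by blast
  then show ?case by (simp add: algebra_simps)
qed (use assms in simp)

lemma residue_class_Least:
  assumes S: "numerical_semigroup S" and i: "i < multiplicity S"
  defines "w \<equiv> LEAST n. n \<in> S \<and> n mod multiplicity S = i"
  shows "w \<in> S" "w mod multiplicity S = i"
    and "\<And>n. n \<in> S \<Longrightarrow> n mod multiplicity S = i \<Longrightarrow> w \<le> n"
proof -
  let ?m = "multiplicity S"
  have m: "0 < ?m" using numerical_semigroup_multiplicity[OF S] by simp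
  obtain B where "\<forall>n\<ge>B. n \<in> S" using numerical_semigroup_eventually_mem[OF S] ..
  moreover have "B \<le> B * ?m + i" using m by (simp add: trans_le_add1)
  ultimately have "B * ?m + i \<in> S \<and> (B * ?m + i) mod ?m = i" using i by simp
  then have "w \<in> S \<and> w mod ?m = i" unfolding w_def by (rule LeastI)
  then show "w \<in> S" "w mod ?m = i" by simp_all
  show "\<And>n. n \<in> S \<Longrightarrow> n mod ?m = i \<Longrightarrow> w \<le> n" unfolding w_def by (simp add: Least_le)
qed

lemma apery_residue_class_eq_Least:
  assumes S: "numerical_semigroup S" and i: "i < multiplicity S"
  shows "(THE a. a \<in> apery S (multiplicity S) \<and> a mod multiplicity S = i) =
    (LEAST n. n \<in> S \<and> n mod multiplicity S = i)"
proof (rule the_equality)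
  let ?m = "multiplicity S" and ?w = "LEAST n. n \<in> S \<and> n mod multiplicity S = i"
  have m: "0 < ?m" "?m \<in> S" using numerical_semigroup_multiplicity[OF S] by simp_all
  note w = residue_class_Least[OF S i]
  have "\<not> (?m \<le> ?w \<and> ?w - ?m \<in> S)"
  proof
    assume h: "?m \<le> ?w \<and> ?w - ?m \<in> S"
    then have "?w \<le> ?w - ?m" using w(3)[of "?w - ?m"] w(2) by (simp add: le_mod_geq)
    then show False using h m by linarith
  qed
  then show "?w \<in> apery S ?m \<and> ?w mod ?m = i" using w by (simp add: apery_def)
  fix a assume a: "a \<in> apery S ?m \<and> a mod ?m = i"
  then have "a \<in> S" and a_min: "\<not> (?m \<le> a \<and> a - ?m \<in> S)" by (auto simp: apery_def)
  have "?w \<le> a" using w(3) \<open>a \<in> S\<close> a by simp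
  moreover have "a mod ?m = ?w mod ?m" using a w(2) by simp
  ultimately have "?m dvd a - ?w" by (simp add: mod_eq_dvd_iff_nat)
  then obtain d where "a - ?w = ?m * d" ..
  then have d: "a = ?w + ?m * d" using \<open>?w \<le> a\<close> by simp
  show "a = ?w"
  proof (cases d)
    case (Suc d')
    then have "?m \<le> a" "a - ?m = ?w + d' * ?m" using d by simp_all
    moreover have "?w + d' * ?m \<in> S" using numerical_semigroup_add_mult[OF S w(1) m(2)] .
    ultimately show ?thesis using a_min by simp
  qed (use d in simp)
qed

lemma kunz_apery:
  assumes S: "numerical_semigroup S" and i: "i < multiplicity S"
  shows "kunz S i * multiplicity S + i \<in> S"
    and "\<And>n. n \<in> S \<Longrightarrow> n mod multiplicity S = i \<Longrightarrow> kunz S i * multiplicity S + i \<le> n"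
proof -
  let ?m = "multiplicity S" and ?w = "LEAST n. n \<in> S \<and> n mod multiplicity S = i"
  note w = residue_class_Least[OF S i]
  have "kunz S i = (?w - i) div ?m"
    unfolding kunz_def Let_def apery_residue_class_eq_Least[OF S i] ..
  also have "?w - i = ?w div ?m * ?m" using w(2) minus_mod_eq_div_mult[of ?w ?m] by simp
  finally have "kunz S i * ?m + i = ?w"
    using numerical_semigroup_multiplicity(2)[OF S] w(2) div_mult_mod_eq[of ?w ?m] by simp
  then show "kunz S i * ?m + i \<in> S" "\<And>n. n \<in> S \<Longrightarrow> n mod ?m = i \<Longrightarrow> kunz S i * ?m + i \<le> n"
    using w by simp_all
qed

lemma numerical_semigroup_eq_kunz_semigroup:
  assumes S: "numerical_semigroup S"
  shows "S = kunz_semigroup (multiplicity S) (kunz S)"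
proof (rule set_eqI)
  fix n
  let ?m = "multiplicity S" and ?K = "kunz S"
  have m: "0 < ?m" "?m \<in> S" using numerical_semigroup_multiplicity[OF S] by simp_all
  have r: "n mod ?m < ?m" using m by simp
  have n: "n = n div ?m * ?m + n mod ?m" by simp
  show "n \<in> S \<longleftrightarrow> n \<in> kunz_semigroup ?m ?K"
  proof
    assume "n \<in> S"
    then have "?K (n mod ?m) * ?m + n mod ?m \<le> n" using kunz_apery(2)[OF S r] by simp
    then have "?K (n mod ?m) * ?m \<le> n div ?m * ?m" using n by linarith
    then show "n \<in> kunz_semigroup ?m ?K" using m by (simp add: mem_kunz_semigroup)
  next
    assume "n \<in> kunz_semigroup ?m ?K"
    then have "?K (n mod ?m) \<le> n div ?m" by (simp add: mem_kunz_semigroup)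
    then have "?K (n mod ?m) * ?m \<le> n div ?m * ?m" by simp
    then have "n = (?K (n mod ?m) * ?m + n mod ?m) + (n div ?m - ?K (n mod ?m)) * ?m"
      using n by (simp add: diff_mult_distrib)
    also have "\<dots> \<in> S" using numerical_semigroup_add_mult[OF S kunz_apery(1)[OF S r] m(2)] .
    finally show "n \<in> S" .
  qed
qed

lemma kunz_admissible_kunz:
  assumes S: "numerical_semigroup S"
  shows "kunz_admissible (multiplicity S) (kunz S)"
proof -
  let ?m = "multiplicity S" and ?K = "kunz S"
  have m: "0 < ?m" using numerical_semigroup_multiplicity[OF S] by simp
  have "0 \<in> S" using S by (simp add: numerical_semigroup_def)
  then have "?K 0 = 0" using kunz_apery(2)[OF S m, of 0] m by simp
  moreover have "1 \<le> ?K i" if "i \<in> {1..<?m}" for i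
  proof (rule ccontr)
    assume "\<not> 1 \<le> ?K i"
    then have "kunz S i = 0" by simp
    then have "i \<in> S" using kunz_apery(1)[OF S, of i] that by simp
    then show False using multiplicity_le[of i S] that by simp
  qed
  moreover have "?K ((i + j) mod ?m) \<le> ?K i + ?K j + (i + j) div ?m" if "i < ?m" "j < ?m" for i j
  proof (rule kunz_inequality_of_add_closed[OF _ m that])
    show "u + v \<in> kunz_semigroup ?m ?K" if "u \<in> kunz_semigroup ?m ?K" "v \<in> kunz_semigroup ?m ?K" for u v
      using S that unfolding numerical_semigroup_eq_kunz_semigroup[OF S, symmetric]
      by (simp add: numerical_semigroup_def)
  qed
  ultimately show ?thesis using m by (simp add: kunz_admissible_def)
qed

lemma kunz_kunz_semigroup:
  assumes K: "kunz_admissible m K" and i: "i < m"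
  shows "kunz (kunz_semigroup m K) i = K i"
proof -
  let ?S = "kunz_semigroup m K"
  have S: "numerical_semigroup ?S" and mS: "multiplicity ?S = m"
    using numerical_semigroup_kunz_semigroup[OF K] multiplicity_kunz_semigroup[OF K] .
  have "kunz ?S i * m + i \<in> ?S" using kunz_apery(1)[OF S] i mS by simp
  then have "K i \<le> kunz ?S i" using i by (simp add: mem_kunz_semigroup)
  moreover have "kunz ?S i * m + i \<le> K i * m + i"
    using kunz_apery(2)[OF S, of i "K i * m + i"] kunz_apery_mem_kunz_semigroup[OF i] i mS by simp
  then have "kunz ?S i \<le> K i" using i by simp
  ultimately show ?thesis by simp
qed

section \<open>Minimal generators\<close>

definition kunz_decomposable :: "nat \<Rightarrow> (nat \<Rightarrow> nat) \<Rightarrow> nat \<Rightarrow> bool" where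
  "kunz_decomposable m K i \<longleftrightarrow>
     (\<exists>j\<in>{1..<m}. \<exists>l\<in>{1..<m}. (K j * m + j) + (K l * m + l) = K i * m + i)"

lemma kunz_semigroup_minus_multiplicity:
  assumes n: "n \<in> kunz_semigroup m K" and not_apery: "n div m \<noteq> K (n mod m)"
  shows "m \<le> n" "n - m \<in> kunz_semigroup m K"
proof -
  have lt: "K (n mod m) < n div m" using n not_apery by (simp add: mem_kunz_semigroup)
  show "m \<le> n"
  proof (rule ccontr)
    assume "\<not> m \<le> n"
    then show False using lt by simp
  qed
  moreover have "0 < m" using lt by (cases "m = 0") simp_all
  ultimately have "(n - m) mod m = n mod m" "(n - m) div m = n div m - 1"
    by (simp_all add: le_mod_geq le_div_geq)
  then show "n - m \<in> kunz_semigroup m K" using lt by (simp add: mem_kunz_semigroup)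
qed

lemma kunz_apery_summand:
  assumes K: "kunz_admissible m K" and i: "i \<in> {1..<m}"
    and u: "u \<in> kunz_semigroup m K" "u \<noteq> 0" and v: "v \<in> kunz_semigroup m K"
    and sum: "u + v = K i * m + i"
  shows "u mod m \<in> {1..<m}" "K (u mod m) * m + u mod m = u"
proof -
  have m: "0 < m" and Ki: "1 \<le> K i" using kunz_admissibleD(1,3)[OF K] i by auto
  have "u div m = K (u mod m)"
  proof (rule ccontr)
    assume "u div m \<noteq> K (u mod m)"
    then have "m \<le> u" "u - m \<in> kunz_semigroup m K"
      using kunz_semigroup_minus_multiplicity[OF u(1)] by blast+
    then have "(u - m) + v \<in> kunz_semigroup m K" using kunz_semigroup_add[OF K _ v] by blast
    moreover have "(u - m) + v = (K i - 1) * m + i" using sum \<open>m \<le> u\<close> Ki by (simp add: diff_mult_distrib)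
    ultimately show False using i Ki by (simp add: mem_kunz_semigroup)
  qed
  then show u_eq: "K (u mod m) * m + u mod m = u" using div_mult_mod_eq[of u m] by simp
  have "u mod m \<noteq> 0"
  proof
    assume "u mod m = 0"
    then show False using u_eq u(2) kunz_admissibleD(2)[OF K] by simp
  qed
  then show "u mod m \<in> {1..<m}" using m by simp
qed

definition minimal_generators :: "nat set \<Rightarrow> nat set" where
  "minimal_generators S = (S - {0}) - {u + v | u v. u \<in> S - {0} \<and> v \<in> S - {0}}"

lemma embedding_dimension_eq_card_minimal_generators:
  "embedding_dimension S = card (minimal_generators S)"
  by (simp add: embedding_dimension_def minimal_generators_def)

lemma minimal_generators_kunz_semigroup_subset:
  assumes K: "kunz_admissible m K"
  shows "minimal_generators (kunz_semigroup m K) \<subseteq>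
    insert m ((\<lambda>i. K i * m + i) ` {i \<in> {1..<m}. \<not> kunz_decomposable m K i})"
proof
  let ?P = "kunz_semigroup m K - {0}"
  fix n assume n: "n \<in> minimal_generators (kunz_semigroup m K)"
  then have nP: "n \<in> ?P" and not_sum: "\<And>u v. u \<in> ?P \<Longrightarrow> v \<in> ?P \<Longrightarrow> n \<noteq> u + v"
    unfolding minimal_generators_def by blast+
  have m: "0 < m" "m \<in> ?P" using kunz_admissibleD(1,2)[OF K] by (simp_all add: mem_kunz_semigroup)
  show "n \<in> insert m ((\<lambda>i. K i * m + i) ` {i \<in> {1..<m}. \<not> kunz_decomposable m K i})"
  proof (cases "n = m")
    case False
    let ?i = "n mod m"
    have "n div m = K ?i"
    proof (rule ccontr)
      assume "n div m \<noteq> K ?i"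
      then have "m \<le> n" "n - m \<in> kunz_semigroup m K"
        using nP kunz_semigroup_minus_multiplicity by blast+
      then show False using not_sum[OF m(2), of "n - m"] False by simp
    qed
    then have n_eq: "K ?i * m + ?i = n" using div_mult_mod_eq[of n m] by simp
    have "?i \<noteq> 0"
    proof
      assume "?i = 0"
      then have "n = 0" using n_eq kunz_admissibleD(2)[OF K] by simp
      then show False using nP by simp
    qed
    then have i: "?i \<in> {1..<m}" using m(1) by simp
    have "\<not> kunz_decomposable m K ?i"
    proof
      assume "kunz_decomposable m K ?i"
      then obtain j l where "j \<in> {1..<m}" "l \<in> {1..<m}" "(K j * m + j) + (K l * m + l) = n"
        unfolding kunz_decomposable_def n_eq by blast
      then show False using not_sum[of "K j * m + j" "K l * m + l"] kunz_apery_mem_kunz_semigroup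
        by auto
    qed
    then show ?thesis using n_eq i by (auto intro: image_eqI[of n _ ?i])
  qed simp
qed

lemma minimal_generators_kunz_semigroup_supset:
  assumes K: "kunz_admissible m K"
  shows "insert m ((\<lambda>i. K i * m + i) ` {i \<in> {1..<m}. \<not> kunz_decomposable m K i}) \<subseteq>
    minimal_generators (kunz_semigroup m K)"
proof -
  let ?P = "kunz_semigroup m K - {0}"
  have m: "0 < m" "m \<in> ?P" using kunz_admissibleD(1,2)[OF K] by (simp_all add: mem_kunz_semigroup)
  have "m \<noteq> u + v" if "u \<in> ?P" "v \<in> ?P" for u v
    using kunz_semigroup_nonzero_ge[OF K, of u] kunz_semigroup_nonzero_ge[OF K, of v] that m(1) by auto
  then have "m \<in> minimal_generators (kunz_semigroup m K)"
    using m(2) unfolding minimal_generators_def by blast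
  moreover have "K i * m + i \<in> minimal_generators (kunz_semigroup m K)"
    if i: "i \<in> {1..<m}" and nd: "\<not> kunz_decomposable m K i" for i
  proof -
    have "K i * m + i \<noteq> u + v" if u: "u \<in> ?P" and v: "v \<in> ?P" for u v
    proof
      assume uv: "K i * m + i = u + v"
      have "u mod m \<in> {1..<m}" "K (u mod m) * m + u mod m = u"
        using kunz_apery_summand[OF K i _ _ _ uv[symmetric]] u v by auto
      moreover have "v mod m \<in> {1..<m}" "K (v mod m) * m + v mod m = v"
        using kunz_apery_summand[OF K i _ _ _ uv[symmetric, unfolded add.commute[of u]]] u v by auto
      ultimately have "kunz_decomposable m K i" unfolding kunz_decomposable_def using uv by metis
      with nd show False ..
    qed
    moreover have "K i * m + i \<in> ?P" using kunz_apery_mem_kunz_semigroup[of i m K] i by simp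
    ultimately show ?thesis unfolding minimal_generators_def by blast
  qed
  ultimately show ?thesis by blast
qed

lemma embedding_dimension_kunz_semigroup:
  assumes K: "kunz_admissible m K"
  shows "embedding_dimension (kunz_semigroup m K) + card {i \<in> {1..<m}. kunz_decomposable m K i} = m"
proof -
  let ?D = "{i \<in> {1..<m}. \<not> kunz_decomposable m K i}"
    and ?E = "{i \<in> {1..<m}. kunz_decomposable m K i}"
  have m: "0 < m" using kunz_admissibleD(1)[OF K] .
  have "m \<notin> (\<lambda>i. K i * m + i) ` ?D"
  proof
    assume "m \<in> (\<lambda>i. K i * m + i) ` ?D"
    then obtain i where i: "i \<in> {1..<m}" and "m = K i * m + i" by auto
    then have "m mod m = (K i * m + i) mod m" by simp
    then show False using i by simp
  qed
  moreover have "inj_on (\<lambda>i. K i * m + i) ?D"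
    by (rule inj_onI) (simp add: mult_add_mod_eq_iff)
  moreover have "minimal_generators (kunz_semigroup m K) = insert m ((\<lambda>i. K i * m + i) ` ?D)"
    using minimal_generators_kunz_semigroup_subset[OF K] minimal_generators_kunz_semigroup_supset[OF K]
    by (rule subset_antisym)
  ultimately have "embedding_dimension (kunz_semigroup m K) = 1 + card ?D"
    by (simp add: embedding_dimension_eq_card_minimal_generators card_image)
  moreover have "card ?D + card ?E = m - 1"
  proof -
    have sub: "?E \<subseteq> {1..<m}" by auto
    have "?D = {1..<m} - ?E" by auto
    then show ?thesis using card_Diff_subset[OF finite_subset[OF sub] sub] card_mono[OF _ sub] by simp
  qed
  ultimately show ?thesis using m by simp
qed

lemma sum_mult_add_eq_iff:
  fixes m :: nat
  assumes "j < m" "l < m" "i < m"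
  shows "(a * m + j) + (b * m + l) = c * m + i \<longleftrightarrow>
    (j + l = i \<and> a + b = c) \<or> (j + l = i + m \<and> a + b + 1 = c)"
proof (cases "j + l < m")
  case True
  have sum: "(a * m + j) + (b * m + l) = (a + b) * m + (j + l)" by (simp add: algebra_simps)
  show ?thesis unfolding sum mult_add_mod_eq_iff[OF True assms(3)] using True by auto
next
  case False
  have "j + l - m < m" using assms by linarith
  have sum: "(a * m + j) + (b * m + l) = (a + b + 1) * m + (j + l - m)"
    using False by (simp add: algebra_simps)
  show ?thesis unfolding sum mult_add_mod_eq_iff[OF \<open>j + l - m < m\<close> assms(3)] using False assms by auto
qed

lemma kunz_decomposable_iff:
  assumes "i < m"
  shows "kunz_decomposable m K i \<longleftrightarrow> (\<exists>j\<in>{1..<m}. \<exists>l\<in>{1..<m}.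
    (j + l = i \<and> K j + K l = K i) \<or> (j + l = i + m \<and> K j + K l + 1 = K i))"
  unfolding kunz_decomposable_def using sum_mult_add_eq_iff[OF _ _ assms] by auto

lemma kunz_not_decomposable_of_eq_1:
  assumes K: "kunz_admissible m K" and "i < m" "K i = 1"
  shows "\<not> kunz_decomposable m K i"
proof
  assume "kunz_decomposable m K i"
  then obtain j l where "j \<in> {1..<m}" "l \<in> {1..<m}"
    "(j + l = i \<and> K j + K l = K i) \<or> (j + l = i + m \<and> K j + K l + 1 = K i)"
    unfolding kunz_decomposable_iff[OF assms(2)] by blast
  moreover have "1 \<le> K j" "1 \<le> K l" using kunz_admissibleD(3)[OF K] calculation(1,2) by auto
  ultimately show False using assms(3) by auto
qed

section \<open>The Kunz excess\<close>

definition kunz_excess :: "nat \<Rightarrow> (nat \<Rightarrow> nat) \<Rightarrow> nat" where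
  "kunz_excess m K = (\<Sum>i\<in>{1..<m}. K i - 1)"

lemma genus_kunz_semigroup_excess:
  assumes K: "kunz_admissible m K"
  shows "genus (kunz_semigroup m K) = m - 1 + kunz_excess m K"
proof -
  have m: "0 < m" using kunz_admissibleD(1)[OF K] .
  have "{..<m} = insert 0 {1..<m}" using m by auto
  then have "(\<Sum>i<m. K i) = (\<Sum>i\<in>{1..<m}. K i)" using kunz_admissibleD(2)[OF K] by simp
  also have "\<dots> = (\<Sum>i\<in>{1..<m}. (K i - 1) + 1)"
  proof (rule sum.cong)
    fix i assume "i \<in> {1..<m}"
    then have "1 \<le> K i" using kunz_admissibleD(3)[OF K] by simp
    then show "K i = K i - 1 + 1" by simp
  qed simp
  also have "\<dots> = kunz_excess m K + (m - 1)"
    unfolding kunz_excess_def by (subst sum.distrib) simp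
  finally show ?thesis using genus_kunz_semigroup(2)[OF m] by simp
qed

lemma sum_ge_of_reflected_pairs:
  fixes f :: "nat \<Rightarrow> nat"
  assumes "\<forall>j\<in>{a..b}. c \<le> f j + f (a + b - j)"
  shows "c * card {a..b} \<le> 2 * sum f {a..b}"
proof -
  have "c * card {a..b} = (\<Sum>j\<in>{a..b}. c)" by simp
  also have "\<dots> \<le> (\<Sum>j\<in>{a..b}. f j + f (a + b - j))" using assms by (intro sum_mono) auto
  also have "\<dots> = sum f {a..b} + (\<Sum>j\<in>{a..b}. f (a + b - j))" by (simp add: sum.distrib)
  also have "(\<Sum>j\<in>{a..b}. f (a + b - j)) = sum f {a..b}"
    using sum.atLeastAtMost_rev[of f a b] by (simp add: add.commute)
  finally show ?thesis by simp
qed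

lemma kunz_excess_ge_of_no_unit_pair:
  assumes K: "kunz_admissible m K" and p: "0 < p" "p < m"
    and no_pair: "\<forall>j\<in>{1..<p}. \<not> (K j = 1 \<and> K (p - j) = 1)"
  shows "p - 1 + 2 * (K p - 1) \<le> 2 * kunz_excess m K"
proof -
  define E where "E i = K i - 1" for i
  have "\<forall>j\<in>{1..p - 1}. 1 \<le> E j + E (1 + (p - 1) - j)"
  proof
    fix j assume j: "j \<in> {1..p - 1}"
    then have "1 \<le> K j" "1 \<le> K (p - j)" "\<not> (K j = 1 \<and> K (p - j) = 1)"
      using kunz_admissibleD(3)[OF K] no_pair p by auto
    moreover have "1 + (p - 1) - j = p - j" using p by simp
    ultimately show "1 \<le> E j + E (1 + (p - 1) - j)" unfolding E_def by auto
  qed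
  from sum_ge_of_reflected_pairs[OF this] have "p - 1 \<le> 2 * sum E {1..p - 1}" by simp
  moreover have "{1..<m} = {1..p - 1} \<union> insert p {p<..<m}" "{1..p - 1} \<inter> insert p {p<..<m} = {}"
    using p by auto
  then have "kunz_excess m K = sum E {1..p - 1} + E p + sum E {p<..<m}"
    unfolding kunz_excess_def E_def by (simp add: sum.union_disjoint)
  ultimately show ?thesis unfolding E_def by linarith
qed

lemma kunz_excess_ge_of_heavy_pairs:
  assumes K: "kunz_admissible m K" and p: "0 < p" "p < m"
    and heavy: "\<forall>j\<in>{1..<p}. 4 \<le> K j + K (p - j)"
    and no_pair: "\<forall>j\<in>{p<..<m}. \<not> (K j = 1 \<and> K (m + p - j) = 1)"
  shows "2 * (p - 1) + 2 * (K p - 1) + (m - 1 - p) \<le> 2 * kunz_excess m K"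
proof -
  define E where "E i = K i - 1" for i
  have "\<forall>j\<in>{1..p - 1}. 2 \<le> E j + E (1 + (p - 1) - j)"
  proof
    fix j assume j: "j \<in> {1..p - 1}"
    then have "4 \<le> K j + K (p - j)" using heavy by auto
    moreover have "1 + (p - 1) - j = p - j" using p by simp
    ultimately show "2 \<le> E j + E (1 + (p - 1) - j)" unfolding E_def by simp
  qed
  from sum_ge_of_reflected_pairs[OF this] have lower: "2 * (p - 1) \<le> 2 * sum E {1..p - 1}" by simp
  have "\<forall>j\<in>{p + 1..m - 1}. 1 \<le> E j + E ((p + 1) + (m - 1) - j)"
  proof
    fix j assume j: "j \<in> {p + 1..m - 1}"
    then have "1 \<le> K j" "1 \<le> K (m + p - j)" "\<not> (K j = 1 \<and> K (m + p - j) = 1)"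
      using kunz_admissibleD(3)[OF K] no_pair p by auto
    moreover have "(p + 1) + (m - 1) - j = m + p - j" using p j by simp
    ultimately show "1 \<le> E j + E ((p + 1) + (m - 1) - j)" unfolding E_def by auto
  qed
  from sum_ge_of_reflected_pairs[OF this] have upper: "m - 1 - p \<le> 2 * sum E {p + 1..m - 1}" by simp
  have "{1..<m} = {1..p - 1} \<union> insert p {p + 1..m - 1}" "{1..p - 1} \<inter> insert p {p + 1..m - 1} = {}"
    using p by auto
  then have "kunz_excess m K = sum E {1..p - 1} + E p + sum E {p + 1..m - 1}"
    unfolding kunz_excess_def E_def by (simp add: sum.union_disjoint)
  then show ?thesis using lower upper unfolding E_def by linarith
qed

section \<open>Semigroups with a prescribed Kunz prefix\<close>

lemma sum_minus_one_eq_cnt: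
  fixes x :: "nat \<Rightarrow> nat"
  assumes "\<forall>i\<in>{1..t}. x i \<in> {1, 2, 3}"
  shows "(\<Sum>i\<in>{1..t}. x i - 1) = cnt_a t x + 2 * cnt_b t x"
proof -
  have "(\<Sum>i\<in>{1..t}. x i - 1) =
      (\<Sum>i\<in>{1..t}. (if x i = 2 then 1 else 0) + 2 * (if x i = 3 then 1 else 0))"
  proof (rule sum.cong[OF refl])
    fix i assume "i \<in> {1..t}"
    then have "x i \<in> {1, 2, 3}" using assms by blast
    then show "x i - 1 = (if x i = 2 then 1 else 0) + 2 * (if x i = 3 then 1 else 0)" by auto
  qed
  also have "\<dots> = (\<Sum>i\<in>{1..t}. if x i = 2 then 1 else 0) + 2 * (\<Sum>i\<in>{1..t}. if x i = 3 then 1 else 0)"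
    by (simp add: sum.distrib sum_distrib_left)
  also have "\<dots> = cnt_a t x + 2 * cnt_b t x"
    unfolding cnt_a_def cnt_b_def by (simp add: sum.If_cases Int_def conj_commute)
  finally show ?thesis .
qed

text \<open>The parameter \<open>k\<close> stands for \<open>k1 + 1\<close>, so that \<open>m = g - k1\<close> and every semigroup counted
  has Kunz excess \<open>k\<close>. For \<open>k = 0\<close> the truncated \<open>2 * k - 1\<close> is \<open>0\<close>, as is \<open>nat (2 * k1 + 1)\<close>.\<close>

locale kunz_prefix =
  fixes k g t m :: nat and x :: "nat \<Rightarrow> nat"
  assumes t_eq: "t = 2 * k - 1" and m_eq: "m = g + 1 - k" and genus_ge: "4 * k \<le> g + 1"
    and prefix_range: "\<forall>i\<in>{1..t}. x i \<in> {1, 2, 3}"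
    and prefix_no_113: "\<forall>i1\<in>{1..t}. \<forall>i2\<in>{1..t}. \<forall>i3\<in>{1..t}.
      i1 + i2 = i3 \<longrightarrow> \<not> (x i1 = 1 \<and> x i2 = 1 \<and> x i3 = 3)"
    and prefix_excess_le: "cnt_a t x + 2 * cnt_b t x \<le> k"
begin

abbreviation extra_twos :: nat where
  "extra_twos \<equiv> k - cnt_a t x - 2 * cnt_b t x"

definition prefix_semigroups :: "nat set set" where
  "prefix_semigroups = {S. numerical_semigroup S \<and> genus S = g \<and> multiplicity S = m
     \<and> (\<forall>i\<in>{1..t}. kunz S i = x i)}"

definition prefix_kunz :: "nat set \<Rightarrow> nat \<Rightarrow> nat" where
  "prefix_kunz A i = (if i = 0 then 0 else if i \<le> t then x i else if i \<in> A then 2 else 1)"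

lemma prefix_arith: "t < m" "0 < m" "3 * k \<le> m" "2 * k \<le> t + 1" "m - 1 + k = g"
  using t_eq m_eq genus_ge by auto

lemma prefix_kunz_bounds:
  assumes "0 < i" shows "1 \<le> prefix_kunz A i" "prefix_kunz A i \<le> 3"
proof -
  have "i \<le> t \<Longrightarrow> x i \<in> {1, 2, 3}" using prefix_range[rule_format, of i] assms by simp
  then show "1 \<le> prefix_kunz A i" "prefix_kunz A i \<le> 3" using assms by (auto simp: prefix_kunz_def)
qed

lemma prefix_kunz_admissible: "kunz_admissible m (prefix_kunz A)"
  unfolding kunz_admissible_def
proof (intro conjI ballI allI impI)
  show "0 < m" "prefix_kunz A 0 = 0" using prefix_arith by (simp_all add: prefix_kunz_def)
  show "1 \<le> prefix_kunz A i" if "i \<in> {1..<m}" for i using that prefix_kunz_bounds by simp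
next
  fix i j assume ij: "i < m" "j < m"
  let ?K = "prefix_kunz A"
  show "?K ((i + j) mod m) \<le> ?K i + ?K j + (i + j) div m"
  proof (cases "i = 0 \<or> j = 0")
    case nonzero: False
    then have pos: "1 \<le> ?K i" "1 \<le> ?K j" using prefix_kunz_bounds by auto
    show ?thesis
    proof (cases "m \<le> i + j")
      case True
      then have "1 \<le> (i + j) div m" using div_le_mono[of m "i + j" m] prefix_arith(2) by simp
      then show ?thesis using pos prefix_kunz_bounds(2)[of "(i + j) mod m" A]
        by (cases "(i + j) mod m = 0") (simp_all add: prefix_kunz_def)
    next
      case no_wrap: False
      show ?thesis
      proof (cases "?K (i + j) = 3")
        case True
        then have "i + j \<le> t" "x (i + j) = 3" using nonzero by (auto simp: prefix_kunz_def split: if_splits)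
        moreover have "?K i = x i" "?K j = x j" using nonzero calculation by (auto simp: prefix_kunz_def)
        ultimately have "\<not> (?K i = 1 \<and> ?K j = 1)" using prefix_no_113 nonzero by force
        then show ?thesis using pos no_wrap True by auto
      next
        case False
        then show ?thesis using pos no_wrap nonzero prefix_kunz_bounds(2)[of "i + j" A] by simp
      qed
    qed
  qed (use ij in auto)
qed

lemma kunz_excess_prefix_kunz:
  assumes A: "A \<subseteq> {t<..<m}"
  shows "kunz_excess m (prefix_kunz A) = cnt_a t x + 2 * cnt_b t x + card A"
proof -
  have "{1..<m} = {1..t} \<union> {t<..<m}" "{1..t} \<inter> {t<..<m} = {}" using prefix_arith by auto
  then have "kunz_excess m (prefix_kunz A) =
      (\<Sum>i\<in>{1..t}. prefix_kunz A i - 1) + (\<Sum>i\<in>{t<..<m}. prefix_kunz A i - 1)"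
    unfolding kunz_excess_def by (simp add: sum.union_disjoint)
  also have "(\<Sum>i\<in>{1..t}. prefix_kunz A i - 1) = (\<Sum>i\<in>{1..t}. x i - 1)"
    by (intro sum.cong refl) (simp add: prefix_kunz_def)
  also have "\<dots> = cnt_a t x + 2 * cnt_b t x" using sum_minus_one_eq_cnt[OF prefix_range] .
  also have "(\<Sum>i\<in>{t<..<m}. prefix_kunz A i - 1) = (\<Sum>i\<in>{t<..<m}. if i \<in> A then 1 else 0)"
    by (intro sum.cong refl) (simp add: prefix_kunz_def)
  also have "\<dots> = card A" using A by (simp add: sum.If_cases Int_absorb1)
  finally show ?thesis .
qed

lemma unit_pair_beyond_prefix:
  assumes K: "kunz_admissible m K" and excess: "kunz_excess m K = k"
    and p: "t < p" "p < m" and "2 \<le> K p"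
  shows "\<exists>j\<in>{1..<p}. K j = 1 \<and> K (p - j) = 1"
proof (rule ccontr)
  assume "\<not> ?thesis"
  then have "p - 1 + 2 * (K p - 1) \<le> 2 * k"
    using kunz_excess_ge_of_no_unit_pair[OF K _ p(2)] p(1) excess by auto
  then show False using \<open>2 \<le> K p\<close> p(1) prefix_arith(4) by linarith
qed

lemma kunz_le_2_beyond_prefix:
  assumes K: "kunz_admissible m K" and excess: "kunz_excess m K = k" and p: "t < p" "p < m"
  shows "K p \<le> 2"
proof (rule ccontr)
  assume "\<not> K p \<le> 2"
  then obtain j where j: "j \<in> {1..<p}" "K j = 1" "K (p - j) = 1"
    using unit_pair_beyond_prefix[OF K excess p] by auto
  have "K p \<le> K j + K (p - j)" using kunz_admissibleD(4)[OF K, of j "p - j"] j p by simp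
  then show False using j p \<open>\<not> K p \<le> 2\<close> by simp
qed

lemma kunz_decomposable_beyond_prefix:
  assumes K: "kunz_admissible m K" and excess: "kunz_excess m K = k"
    and p: "t < p" "p < m" and "K p = 2"
  shows "kunz_decomposable m K p"
proof -
  obtain j where "j \<in> {1..<p}" "K j = 1" "K (p - j) = 1"
    using unit_pair_beyond_prefix[OF K excess p] \<open>K p = 2\<close> by auto
  then show ?thesis unfolding kunz_decomposable_iff[OF p(2)] using p \<open>K p = 2\<close>
    by (intro bexI[of _ j] bexI[of _ "p - j"]) auto
qed

lemma kunz_decomposable_of_eq_3:
  assumes K: "kunz_admissible m K" and excess: "kunz_excess m K = k"
    and i: "0 < i" "i \<le> t" and "K i = 3"
  shows "kunz_decomposable m K i"
proof (rule ccontr)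
  assume nd: "\<not> kunz_decomposable m K i"
  have im: "i < m" using i prefix_arith(1) by simp
  have "4 \<le> K j + K (i - j)" if j: "j \<in> {1..<i}" for j
  proof -
    have "3 \<le> K j + K (i - j)"
      using kunz_admissibleD(4)[OF K, of j "i - j"] j im \<open>K i = 3\<close> by simp
    moreover have "K j + K (i - j) \<noteq> 3"
    proof
      assume "K j + K (i - j) = 3"
      then have "kunz_decomposable m K i" unfolding kunz_decomposable_iff[OF im]
        using j im \<open>K i = 3\<close> by (intro bexI[of _ j] bexI[of _ "i - j"]) auto
      with nd show False ..
    qed
    ultimately show ?thesis by simp
  qed
  moreover have "\<not> (K j = 1 \<and> K (m + i - j) = 1)" if j: "j \<in> {i<..<m}" for j
  proof
    assume "K j = 1 \<and> K (m + i - j) = 1"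
    then have "kunz_decomposable m K i" unfolding kunz_decomposable_iff[OF im]
      using j im \<open>K i = 3\<close> by (intro bexI[of _ j] bexI[of _ "m + i - j"]) auto
    with nd show False ..
  qed
  ultimately have "2 * (i - 1) + 2 * (K i - 1) + (m - 1 - i) \<le> 2 * k"
    using kunz_excess_ge_of_heavy_pairs[OF K i(1) im] excess by blast
  then show False using \<open>K i = 3\<close> i im prefix_arith(3) by linarith
qed

lemma prefix_kunz_decomposable_2_iff:
  assumes i: "i \<in> {1..t}" "x i = 2"
  shows "kunz_decomposable m (prefix_kunz A) i \<longleftrightarrow>
    (\<exists>j1\<in>{1..t}. \<exists>j2\<in>{1..t}. j1 + j2 = i \<and> x j1 = 1 \<and> x j2 = 1)"
proof
  let ?K = "prefix_kunz A"
  have im: "i < m" and Ki: "?K i = 2" using i prefix_arith(1) by (auto simp: prefix_kunz_def)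
  {
    assume "kunz_decomposable m ?K i"
    then obtain j l where j: "j \<in> {1..<m}" and l: "l \<in> {1..<m}"
      and jl: "(j + l = i \<and> ?K j + ?K l = ?K i) \<or> (j + l = i + m \<and> ?K j + ?K l + 1 = ?K i)"
      unfolding kunz_decomposable_iff[OF im] by blast
    have "1 \<le> ?K j" "1 \<le> ?K l" using j l prefix_kunz_bounds(1) by auto
    then have "j + l = i" "?K j = 1" "?K l = 1" using jl Ki by auto
    moreover have "j \<le> t" "l \<le> t" using \<open>j + l = i\<close> i j l by auto
    ultimately have "x j = 1" "x l = 1" using j l by (auto simp: prefix_kunz_def)
    then show "\<exists>j1\<in>{1..t}. \<exists>j2\<in>{1..t}. j1 + j2 = i \<and> x j1 = 1 \<and> x j2 = 1"
      using j l \<open>j \<le> t\<close> \<open>l \<le> t\<close> \<open>j + l = i\<close>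
      by (intro bexI[of _ j] bexI[of _ l]) auto
  }
  {
    assume "\<exists>j1\<in>{1..t}. \<exists>j2\<in>{1..t}. j1 + j2 = i \<and> x j1 = 1 \<and> x j2 = 1"
    then obtain j1 j2 where "j1 \<in> {1..t}" "j2 \<in> {1..t}" "j1 + j2 = i" "x j1 = 1" "x j2 = 1"
      by blast
    then show "kunz_decomposable m ?K i" unfolding kunz_decomposable_iff[OF im]
      using Ki prefix_arith(1) by (intro bexI[of _ j1] bexI[of _ j2]) (auto simp: prefix_kunz_def)
  }
qed

lemma prefix_kunz_decomposable_iff:
  assumes A: "A \<subseteq> {t<..<m}" "card A = extra_twos" and i: "i \<in> {1..<m}"
  shows "kunz_decomposable m (prefix_kunz A) i \<longleftrightarrow> i \<in> A \<or> (i \<le> t \<and> x i = 3) \<or>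
    (i \<le> t \<and> (\<exists>j1\<in>{1..t}. \<exists>j2\<in>{1..t}. j1 + j2 = i \<and> x j1 = 1 \<and> x j2 = 1 \<and> x i = 2))"
proof -
  let ?K = "prefix_kunz A"
  have K: "kunz_admissible m ?K" by (rule prefix_kunz_admissible)
  have excess: "kunz_excess m ?K = k"
    using kunz_excess_prefix_kunz[OF A(1)] A(2) prefix_excess_le by simp
  show ?thesis
  proof (cases "i \<le> t")
    case True
    then have "i \<notin> A" "x i \<in> {1, 2, 3}" "?K i = x i"
      using A(1) prefix_range i by (auto simp: prefix_kunz_def)
    then consider "x i = 1" "?K i = 1" | "x i = 2" | "x i = 3" "?K i = 3" by auto
    then show ?thesis
    proof cases
      case 1
      then show ?thesis using kunz_not_decomposable_of_eq_1[OF K, of i] i \<open>i \<notin> A\<close> by auto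
    next
      case 2
      then show ?thesis
        using prefix_kunz_decomposable_2_iff[of i A] i True \<open>i \<notin> A\<close> by auto
    next
      case 3
      then show ?thesis using kunz_decomposable_of_eq_3[OF K excess, of i] i True by auto
    qed
  next
    case False
    show ?thesis
    proof (cases "i \<in> A")
      case True
      then have "?K i = 2" using False i by (simp add: prefix_kunz_def)
      then show ?thesis using kunz_decomposable_beyond_prefix[OF K excess, of i] True False i by simp
    next
      case notA: False
      then have "?K i = 1" using False i by (simp add: prefix_kunz_def)
      then show ?thesis using kunz_not_decomposable_of_eq_1[OF K, of i] notA False i by simp
    qed
  qed
qed

lemma decomposable_prefix_kunz:
  assumes A: "A \<subseteq> {t<..<m}" "card A = extra_twos"
  shows "{i \<in> {1..<m}. kunz_decomposable m (prefix_kunz A) i} =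
    A \<union> {i \<in> {1..t}. x i = 3} \<union>
    {i \<in> {1..t}. \<exists>j1\<in>{1..t}. \<exists>j2\<in>{1..t}. j1 + j2 = i \<and> x j1 = 1 \<and> x j2 = 1 \<and> x i = 2}"
    (is "_ = ?R")
proof (rule set_eqI)
  fix i
  show "i \<in> {i \<in> {1..<m}. kunz_decomposable m (prefix_kunz A) i} \<longleftrightarrow> i \<in> ?R"
  proof (cases "i \<in> {1..<m}")
    case True
    then show ?thesis using prefix_kunz_decomposable_iff[OF A True] by simp
  next
    case False
    moreover have "?R \<subseteq> {1..<m}" using A(1) prefix_arith(1) by auto
    ultimately show ?thesis by blast
  qed
qed

lemma kunz_semigroup_prefix_kunz_mem:
  assumes A: "A \<subseteq> {t<..<m}" "card A = extra_twos"
  shows "kunz_semigroup m (prefix_kunz A) \<in> prefix_semigroups"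
proof -
  have K: "kunz_admissible m (prefix_kunz A)" by (rule prefix_kunz_admissible)
  have "genus (kunz_semigroup m (prefix_kunz A)) = g"
    using genus_kunz_semigroup_excess[OF K] kunz_excess_prefix_kunz[OF A(1)] A(2)
      prefix_excess_le prefix_arith(5) by simp
  moreover have "kunz (kunz_semigroup m (prefix_kunz A)) i = x i" if "i \<in> {1..t}" for i
    using kunz_kunz_semigroup[OF K, of i] that prefix_arith(1) by (simp add: prefix_kunz_def)
  ultimately show ?thesis unfolding prefix_semigroups_def
    using numerical_semigroup_kunz_semigroup[OF K] multiplicity_kunz_semigroup[OF K] by simp
qed

lemma prefix_semigroupsE:
  assumes "S \<in> prefix_semigroups"
  obtains A where "A \<subseteq> {t<..<m}" "card A = extra_twos" "S = kunz_semigroup m (prefix_kunz A)"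
proof -
  have S: "numerical_semigroup S" "genus S = g" "multiplicity S = m"
    and prefix: "\<forall>i\<in>{1..t}. kunz S i = x i"
    using assms by (simp_all add: prefix_semigroups_def)
  let ?K = "kunz S"
  have K: "kunz_admissible m ?K" and S_eq: "S = kunz_semigroup m ?K"
    using kunz_admissible_kunz[OF S(1)] numerical_semigroup_eq_kunz_semigroup[OF S(1)] S(3) by simp_all
  have "genus (kunz_semigroup m ?K) = g" using S(2) by (simp only: S_eq[symmetric])
  then have excess: "kunz_excess m ?K = k"
    using genus_kunz_semigroup_excess[OF K] prefix_arith(5) by simp
  define A where "A = {p \<in> {t<..<m}. ?K p = 2}"
  have A: "A \<subseteq> {t<..<m}" by (auto simp: A_def)
  have agree: "?K i = prefix_kunz A i" if i: "i < m" for i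
  proof -
    consider "i = 0" | "i \<in> {1..t}" | "i \<in> {t<..<m}" using i by (cases "i = 0"; cases "i \<le> t") auto
    then show ?thesis
    proof cases
      case 3
      then have "1 \<le> ?K i" "?K i \<le> 2"
        using kunz_admissibleD(3)[OF K] kunz_le_2_beyond_prefix[OF K excess] by auto
      then show ?thesis using 3 by (auto simp: prefix_kunz_def A_def)
    qed (use kunz_admissibleD(2)[OF K] prefix in \<open>auto simp: prefix_kunz_def\<close>)
  qed
  have "S = kunz_semigroup m (prefix_kunz A)"
    using S_eq kunz_semigroup_cong[OF prefix_arith(2) agree] by (rule trans)
  moreover have "kunz_excess m (prefix_kunz A) = k"
    using excess agree unfolding kunz_excess_def by simp
  then have "card A = extra_twos" using kunz_excess_prefix_kunz[OF A] by simp
  ultimately show thesis using that A by blast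
qed

lemma prefix_semigroups_eq_image:
  "prefix_semigroups =
    (\<lambda>A. kunz_semigroup m (prefix_kunz A)) ` {A. A \<subseteq> {t<..<m} \<and> card A = extra_twos}"
  by (auto elim!: prefix_semigroupsE intro: kunz_semigroup_prefix_kunz_mem)

lemma inj_on_prefix_kunz_semigroup:
  "inj_on (\<lambda>A. kunz_semigroup m (prefix_kunz A)) {A. A \<subseteq> {t<..<m}}"
proof (rule inj_onI)
  fix A B assume A: "A \<in> {A. A \<subseteq> {t<..<m}}" and B: "B \<in> {A. A \<subseteq> {t<..<m}}"
    and eq: "kunz_semigroup m (prefix_kunz A) = kunz_semigroup m (prefix_kunz B)"
  have agree: "prefix_kunz A i = prefix_kunz B i" if "i < m" for i
  proof -
    have "prefix_kunz A i = kunz (kunz_semigroup m (prefix_kunz A)) i"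
      using kunz_kunz_semigroup[OF prefix_kunz_admissible that] by simp
    also have "\<dots> = kunz (kunz_semigroup m (prefix_kunz B)) i" by (simp only: eq)
    also have "\<dots> = prefix_kunz B i"
      using kunz_kunz_semigroup[OF prefix_kunz_admissible that] by simp
    finally show ?thesis .
  qed
  have "i \<in> A \<longleftrightarrow> i \<in> B" if i: "i \<in> {t<..<m}" for i
    using agree[of i] i by (simp add: prefix_kunz_def split: if_splits)
  then show "A = B" using A B by blast
qed

lemma card_prefix_semigroups: "card prefix_semigroups = (g + 1 - 3 * k) choose extra_twos"
proof -
  have "card prefix_semigroups = card {A. A \<subseteq> {t<..<m} \<and> card A = extra_twos}"
    unfolding prefix_semigroups_eq_image
    by (rule card_image, rule inj_on_subset[OF inj_on_prefix_kunz_semigroup]) auto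
  also have "\<dots> = (m - 1 - t) choose extra_twos" using n_subsets[of "{t<..<m}"] by simp
  also have "\<dots> = (g + 1 - 3 * k) choose extra_twos"
  proof (cases "k = 0")
    case True
    then show ?thesis using prefix_excess_le by simp
  next
    case False
    then show ?thesis using t_eq m_eq genus_ge by simp
  qed
  finally show ?thesis .
qed

lemma embedding_dimension_prefix_semigroups:
  assumes "S \<in> prefix_semigroups"
  shows "embedding_dimension S + extra_twos + cnt_b t x + cnt_c t x = m"
proof -
  obtain A where A: "A \<subseteq> {t<..<m}" "card A = extra_twos" and S: "S = kunz_semigroup m (prefix_kunz A)"
    using prefix_semigroupsE[OF assms] .
  let ?B = "{i \<in> {1..t}. x i = 3}"
    and ?C = "{i \<in> {1..t}. \<exists>j1\<in>{1..t}. \<exists>j2\<in>{1..t}. j1 + j2 = i \<and> x j1 = 1 \<and> x j2 = 1 \<and> x i = 2}"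
  have "finite A" using A(1) finite_subset by blast
  moreover have "A \<inter> (?B \<union> ?C) = {}" "?B \<inter> ?C = {}" using A(1) by auto
  ultimately have "card (A \<union> ?B \<union> ?C) = card A + card ?B + card ?C"
    by (simp add: card_Un_disjoint Un_assoc)
  then have "card {i \<in> {1..<m}. kunz_decomposable m (prefix_kunz A) i} = card A + cnt_b t x + cnt_c t x"
    unfolding decomposable_prefix_kunz[OF A] cnt_b_def cnt_c_def .
  then show ?thesis
    using embedding_dimension_kunz_semigroup[OF prefix_kunz_admissible, of A] S A(2) by simp
qed

end

theorem proposition8p7:
  fixes k1 k2 :: int and g :: nat and x :: "nat \<Rightarrow> nat"
  defines "t \<equiv> nat (2 * k1 + 1)"
  assumes "-1 \<le> k1" and "k1 \<le> k2" and "int g \<ge> 4 * k1 + 3"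
    and "\<forall>i\<in>{1..t}. x i \<in> {1, 2, 3}"
    and "\<forall>i1\<in>{1..t}. \<forall>i2\<in>{1..t}. \<forall>i3\<in>{1..t}.
           i1 + i2 = i3 \<longrightarrow> \<not> (x i1 = 1 \<and> x i2 = 1 \<and> x i3 = 3)"
    and "int (cnt_a t x) + int (cnt_b t x) - int (cnt_c t x) = 2 * k1 + 1 - k2"
    and "int (cnt_a t x) + 2 * int (cnt_b t x) \<le> k1 + 1"
  shows "card {S. numerical_semigroup S \<and> genus S = g
                 \<and> int (multiplicity S) = int g - k1
                 \<and> int (embedding_dimension S) = int g - k2
                 \<and> (\<forall>i\<in>{1..t}. kunz S i = x i)}
         = nat (int g - 3 * k1 - 2) choose nat (k1 + 1 - int (cnt_a t x) - 2 * int (cnt_b t x))"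
proof -
  define k where "k = nat (k1 + 1)"
  have k1: "k1 = int k - 1" using assms(2) by (simp add: k_def)
  have t: "t = 2 * k - 1" unfolding t_def k1 by (cases k) simp_all
  have gk: "4 * k \<le> g + 1" using assms(4) k1 by simp
  have ab: "cnt_a t x + 2 * cnt_b t x \<le> k" using assms(8) k1 by simp
  interpret kunz_prefix k g t "g + 1 - k" x
    by unfold_locales (fact t gk ab assms(5) assms(6) refl)+
  have m: "int (g + 1 - k) = int g - k1" using gk k1 by simp
  have edim: "int (embedding_dimension S) = int g - k2" if "S \<in> prefix_semigroups" for S
    using embedding_dimension_prefix_semigroups[OF that] assms(7) ab gk k1 by arith
  have "{S. numerical_semigroup S \<and> genus S = g \<and> int (multiplicity S) = int g - k1
      \<and> int (embedding_dimension S) = int g - k2 \<and> (\<forall>i\<in>{1..t}. kunz S i = x i)} = prefix_semigroups"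
    using edim unfolding prefix_semigroups_def m[symmetric] of_nat_eq_iff by blast
  moreover have "nat (int g - 3 * k1 - 2) = g + 1 - 3 * k"
    and "nat (k1 + 1 - int (cnt_a t x) - 2 * int (cnt_b t x)) = extra_twos"
    using gk ab k1 by simp_all
  ultimately show ?thesis using card_prefix_semigroups by simp
qed

end
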